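(* Let $\Gamma\subseteq\mathrm{Aff}(\mathbb{R}^n)$ be an $n$-dimensional crystallographic group whose subgroup of pure translations is exactly $\mathbb{Z}^n$, with holonomy group $F\subseteq\mathrm{GL}_n(\mathbb{Z})$. Then there exists a finite set $\Delta^{base}\subseteq\mathbb{R}^n$ such that for every $d^{base}\in\Delta^{base}$ the map $\xi_{(d^{base},I_n)}$ is an automorphism of $\Gamma$, and every $\varphi\in\mathrm{Aut}(\Gamma)$ with $\varphi|_{\mathbb{Z}^n}=I_n$ can be written as $\varphi=\iota\circ\xi_{(d^{base},I_n)}$ where $\iota=\xi_{(d^{int},I_n)}$ is an inner automorphism of $\Gamma$ with $d^{int}\in\mathbb{Z}^n$ and $d^{base}\in\Delta^{base}$.
   Context: $\mathrm{Aff}(\mathbb{R}^n)=\mathbb{R}^n\rtimes\mathrm{GL}_n(\mathbb{R})$ with multiplication $(d_1,D_1)(d_2,D_2)=(d_1+D_1d_2,D_1D_2)$. An $n$-dimensional crystallographic group is a discrete cocompact subgroup of the Euclidean group $\mathbb{R}^n\rtimes O(n)$; here it is realised (as is always possible) inside $\mathrm{Aff}(\mathbb{R}^n)$ such that $\Gamma\cap\mathbb{R}^n=\{(z,I_n)\mid z\in\mathbb{Z}^n\}$, identified with $\mathbb{Z}^n$. The holonomy group is $F=\{A\mid\exists a:\ (a,A)\in\Gamma\}\subseteq\mathrm{GL}_n(\mathbb{Z})$, a finite group. For $(d,D)\in\mathrm{Aff}(\mathbb{R}^n)$, $\xi_{(d,D)}$ denotes the map $\gamma\mapsto(d,D)\gamma(d,D)^{-1}$.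 Every automorphism $\varphi$ of $\Gamma$ is of the form $\xi_{(d,D)}$ for some $(d,D)\in\mathrm{Aff}(\mathbb{R}^n)$, and then $\varphi|_{\mathbb{Z}^n}$ is given by the matrix $D$. *)

theory Defs
  imports "HOL-Analysis.Analysis"
begin

text \<open>Elements of Aff(R^n) = R^n \<rtimes> GL_n(R) are represented as pairs (d, D).\<close>

type_synonym 'n aff = "(real ^ 'n) \<times> (real ^ 'n ^ 'n)"

definition aff_mult :: "'n::finite aff \<Rightarrow> 'n aff \<Rightarrow> 'n aff" where
  "aff_mult g h = (fst g + snd g *v fst h, snd g ** snd h)"

definition aff_inv :: "'n::finite aff \<Rightarrow> 'n aff" where
  "aff_inv g = (- (matrix_inv (snd g) *v fst g), matrix_inv (snd g))"

definition Aff :: "'n::finite aff set" where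
  "Aff = {g. invertible (snd g)}"

definition Euc :: "'n::finite aff set" where
  "Euc = {g. orthogonal_matrix (snd g)}"

definition aff_subgroup :: "'n::finite aff set \<Rightarrow> 'n aff set \<Rightarrow> bool" where
  "aff_subgroup H G \<longleftrightarrow> H \<subseteq> G \<and> (0, mat 1) \<in> H \<and>
     (\<forall>g\<in>H. \<forall>h\<in>H. aff_mult g h \<in> H) \<and> (\<forall>g\<in>H. aff_inv g \<in> H)"

definition discrete_set :: "'n::finite aff set \<Rightarrow> bool" where
  "discrete_set H \<longleftrightarrow> (\<forall>g\<in>H. \<exists>e>0. \<forall>h\<in>H. dist h g < e \<longrightarrow> h = g)"

text \<open>Cocompact in the Euclidean group: Euc/H is compact, i.e. Euc = K H for a compact K.\<close>
definition cocompact_in_Euc :: "'n::finite aff set \<Rightarrow> bool" where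
  "cocompact_in_Euc H \<longleftrightarrow> (\<exists>K. compact K \<and> K \<subseteq> Euc \<and>
     Euc \<subseteq> {aff_mult k h | k h. k \<in> K \<and> h \<in> H})"

definition xi :: "'n::finite aff \<Rightarrow> 'n aff \<Rightarrow> 'n aff" where
  "xi a g = aff_mult (aff_mult a g) (aff_inv a)"

definition crystallographic :: "'n::finite aff set \<Rightarrow> bool" where
  "crystallographic \<Gamma> \<longleftrightarrow> aff_subgroup \<Gamma> Aff \<and>
     (\<exists>a\<in>Aff. aff_subgroup (xi a ` \<Gamma>) Euc \<and> discrete_set (xi a ` \<Gamma>)
                \<and> cocompact_in_Euc (xi a ` \<Gamma>))"

definition int_vecs :: "(real ^ 'n::finite) set" where
  "int_vecs = {z. \<forall>i. z $ i \<in> \<int>}"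

definition holonomy :: "'n::finite aff set \<Rightarrow> (real ^ 'n ^ 'n) set" where
  "holonomy \<Gamma> = snd ` \<Gamma>"

definition is_aut :: "'n::finite aff set \<Rightarrow> ('n aff \<Rightarrow> 'n aff) \<Rightarrow> bool" where
  "is_aut \<Gamma> \<phi> \<longleftrightarrow> bij_betw \<phi> \<Gamma> \<Gamma> \<and>
     (\<forall>g\<in>\<Gamma>. \<forall>h\<in>\<Gamma>. \<phi> (aff_mult g h) = aff_mult (\<phi> g) (\<phi> h))"

end

theory Submission
  imports Defs
begin

text \<open>The holonomy group is finite: its elements are integral matrices (they preserve the
  lattice of translations), and they are uniformly bounded because they are conjugate, by one
  fixed matrix, to orthogonal matrices. An automorphism \<open>\<phi>\<close> that fixes the translations
  preserves linear parts and shifts translation parts, \<open>\<phi> (a, A) = (a + \<delta> A, A)\<close>, where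
  \<open>\<delta>\<close> is an integral 1-cocycle on the holonomy group \<open>F\<close>. Averaging the cocycle identity over the
  finite group \<open>F\<close> shows \<open>\<delta> A = d - A d\<close> for \<open>d = (1/|F|) \<Sum>\<^sub>B \<delta> B\<close>, i.e. \<open>\<phi> = xi (d, I)\<close>.
  Splitting \<open>d\<close> into its integral part and a fractional part with coordinates in
  \<open>{0, 1/|F|, \<dots>, (|F| - 1)/|F|}\<close> yields the finite set of base translations.\<close>

lemma matrix_inv_mult:
  fixes A :: "real^'n::finite^'n"
  assumes "invertible A"
  shows "A ** matrix_inv A = mat 1" and "matrix_inv A ** A = mat 1"
proof -
  have "\<exists>A'. A ** A' = mat 1 \<and> A' ** A = mat 1" using assms invertible_def by blast
  then have "A ** matrix_inv A = mat 1 \<and> matrix_inv A ** A = mat 1"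
    unfolding matrix_inv_def by (rule someI_ex)
  then show "A ** matrix_inv A = mat 1" and "matrix_inv A ** A = mat 1" by auto
qed

lemma matrix_inv_mat_1: "matrix_inv (mat 1 :: real^'n::finite^'n) = mat 1"
  using matrix_inv_mult(1)[of "mat 1 :: real^'n^'n"] by (simp add: invertible_def)

lemma matrix_vector_mult_uminus: "(A::real^'n::finite^'m::finite) *v (- x) = - (A *v x)"
  using matrix_vector_mult_diff_distrib[of A 0 x] by simp

lemma matrix_vector_mult_sum:
  "(A::real^'n::finite^'m::finite) *v sum f S = (\<Sum>x\<in>S. A *v f x)"
  by (simp add: linear_sum[OF matrix_vector_mul_linear] o_def)

lemma norm_orthogonal_matrix_vector_mult:
  "orthogonal_matrix (R::real^'n::finite^'n) \<Longrightarrow> norm (R *v x) = norm x"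
  by (metis matrix_vector_mul_linear orthogonal_transformation_matrix
      orthogonal_transformation_norm matrix_of_matrix_vector_mul)

lemma aff_mult_Pair [simp]: "aff_mult (a, A) (b, B) = (a + A *v b, A ** B)"
  by (simp add: aff_mult_def)

lemma xi_translation: "xi (d, mat 1) g = (fst g + d - snd g *v d, snd g)"
  by (cases g) (simp add: xi_def aff_inv_def matrix_inv_mat_1 matrix_vector_mult_uminus)

lemma xi_translation_comp: "xi (a, mat 1) (xi (b, mat 1) g) = xi (a + b, mat 1) g"
  by (simp add: xi_translation algebra_simps)

subsection \<open>Integral vectors and matrices\<close>

lemma int_vecs_diff: "x \<in> int_vecs \<Longrightarrow> y \<in> int_vecs \<Longrightarrow> x - y \<in> int_vecs"
  by (auto simp: int_vecs_def)

lemma int_vecs_uminus: "x \<in> int_vecs \<Longrightarrow> - x \<in> int_vecs"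
  by (auto simp: int_vecs_def)

lemma int_vecs_sum: "(\<And>x. x \<in> S \<Longrightarrow> f x \<in> int_vecs) \<Longrightarrow> sum f S \<in> int_vecs"
  by (auto simp: int_vecs_def intro!: Ints_sum)

lemma axis_in_int_vecs: "axis j 1 \<in> int_vecs"
  by (auto simp: int_vecs_def axis_def)

lemma finite_vec_components:
  assumes "finite K"
  shows "finite {v::'a^'n::finite. \<forall>i. v $ i \<in> K}"
proof -
  have "{v::'a^'n. \<forall>i. v $ i \<in> K} \<subseteq> vec_lambda ` (UNIV \<rightarrow>\<^sub>E K)"
  proof
    fix v :: "'a^'n"
    assume "v \<in> {v. \<forall>i. v $ i \<in> K}"
    then have "vec_nth v \<in> UNIV \<rightarrow>\<^sub>E K" by auto
    then show "v \<in> vec_lambda ` (UNIV \<rightarrow>\<^sub>E K)"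
      by (intro image_eqI[of v vec_lambda "vec_nth v"]) simp_all
  qed
  moreover have "finite (vec_lambda ` (UNIV \<rightarrow>\<^sub>E K) :: ('a^'n) set)"
    using assms by (simp add: finite_PiE)
  ultimately show ?thesis by (rule finite_subset)
qed

lemma finite_bounded_int_matrices:
  "finite {B::real^'m::finite^'n::finite. \<forall>i j. B $ i $ j \<in> \<int> \<and> \<bar>B $ i $ j\<bar> \<le> C}"
proof -
  let ?K = "{x::real. x \<in> \<int> \<and> \<bar>x\<bar> \<le> C}"
  have "{B::real^'m^'n. \<forall>i j. B $ i $ j \<in> \<int> \<and> \<bar>B $ i $ j\<bar> \<le> C}
      \<subseteq> {B. \<forall>i. B $ i \<in> {v. \<forall>j. v $ j \<in> ?K}}"
    by auto
  moreover have "finite ?K" using finite_abs_int_segment[of C] by simp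
  then have "finite {v::real^'m. \<forall>j. v $ j \<in> ?K}" by (rule finite_vec_components)
  then have "finite {B::real^'m^'n. \<forall>i. B $ i \<in> {v. \<forall>j. v $ j \<in> ?K}}"
    by (rule finite_vec_components)
  ultimately show ?thesis by (rule finite_subset)
qed

text \<open>Conjugating \<open>B = E\<^sup>-\<^sup>1 R E\<close> with \<open>R\<close> orthogonal bounds the columns \<open>B e\<^sub>j\<close>
  uniformly in \<open>B\<close>, so only finitely many integral \<open>B\<close> occur.\<close>

lemma finite_int_matrices_conj_orthogonal:
  fixes E :: "real^'n::finite^'n"
  assumes "invertible E"
  shows "finite {B. (\<forall>i j. B $ i $ j \<in> \<int>) \<and> orthogonal_matrix (E ** B ** matrix_inv E)}"
proof -
  obtain C where C: "\<And>x. norm (matrix_inv E *v x) \<le> C * norm x" "C > 0"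
    using linear_bounded_pos[OF matrix_vector_mul_linear] by metis
  define M where "M = (\<Sum>j\<in>UNIV. norm (E *v axis j 1))"
  have bound: "\<bar>B $ i $ j\<bar> \<le> C * M" if R: "orthogonal_matrix (E ** B ** matrix_inv E)" for B i j
  proof -
    let ?R = "E ** B ** matrix_inv E"
    have "B = matrix_inv E ** ?R ** E"
      by (metis matrix_mul_assoc matrix_mul_lid matrix_mul_rid matrix_inv_mult(2)[OF assms])
    then have "B *v axis j 1 = matrix_inv E *v (?R *v (E *v axis j 1))"
      by (metis matrix_vector_mul_assoc)
    then have "norm (B *v axis j 1) \<le> C * norm (E *v axis j 1)"
      using C(1) norm_orthogonal_matrix_vector_mult[OF R] by metis
    also have "\<dots> \<le> C * M"
      unfolding M_def using C(2) by (intro mult_left_mono member_le_sum) auto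
    finally have "norm (B *v axis j 1) \<le> C * M" .
    moreover have "\<bar>B $ i $ j\<bar> \<le> norm (B *v axis j 1)"
      using component_le_norm_cart[of "B *v axis j 1" i]
      by (simp add: matrix_vector_mult_basis column_def)
    ultimately show ?thesis by linarith
  qed
  have "{B. (\<forall>i j. B $ i $ j \<in> \<int>) \<and> orthogonal_matrix (E ** B ** matrix_inv E)}
      \<subseteq> {B. \<forall>i j. B $ i $ j \<in> \<int> \<and> \<bar>B $ i $ j\<bar> \<le> C * M}"
  proof (intro subsetI CollectI allI conjI)
    fix B i j
    assume "B \<in> {B. (\<forall>i j. B $ i $ j \<in> \<int>) \<and> orthogonal_matrix (E ** B ** matrix_inv E)}"
    then show "B $ i $ j \<in> \<int>" and "\<bar>B $ i $ j\<bar> \<le> C * M" using bound by auto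
  qed
  then show ?thesis using finite_bounded_int_matrices finite_subset by blast
qed

lemma finite_group_cocycle_coboundary:
  fixes F :: "(real^'n::finite^'n) set" and c :: "real^'n^'n \<Rightarrow> real^'n"
  assumes fin: "finite F" and mult: "\<And>A B. A \<in> F \<Longrightarrow> B \<in> F \<Longrightarrow> A ** B \<in> F"
    and inv: "\<And>A. A \<in> F \<Longrightarrow> invertible A"
    and cocycle: "\<And>A B. A \<in> F \<Longrightarrow> B \<in> F \<Longrightarrow> c (A ** B) = c A + A *v c B"
    and A: "A \<in> F"
  defines "d \<equiv> (1 / real (card F)) *\<^sub>R (\<Sum>B\<in>F. c B)"
  shows "c A = d - A *v d"
proof -
  let ?S = "\<Sum>B\<in>F. c B"
  have inj: "inj_on ((**) A) F"
  proof (rule inj_onI)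
    fix B B' assume "A ** B = A ** B'"
    then have "matrix_inv A ** (A ** B) = matrix_inv A ** (A ** B')" by simp
    then show "B = B'" by (simp add: matrix_mul_assoc matrix_inv_mult(2)[OF inv[OF A]])
  qed
  have "(**) A ` F = F"
    by (rule endo_inj_surj[OF fin _ inj]) (use mult[OF A] in blast)
  then have "?S = (\<Sum>B\<in>F. c (A ** B))"
    using sum.reindex[OF inj, of c] by simp
  also have "\<dots> = (\<Sum>B\<in>F. c A + A *v c B)"
    using cocycle[OF A] by simp
  also have "\<dots> = real (card F) *\<^sub>R c A + A *v ?S"
    by (simp only: sum.distrib sum_constant_scaleR matrix_vector_mult_sum)
  finally have "real (card F) *\<^sub>R c A = ?S - A *v ?S" by (simp add: eq_diff_eq)
  moreover have "card F > 0" using fin A card_gt_0_iff by blast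
  ultimately have "c A = (1 / real (card F)) *\<^sub>R (?S - A *v ?S)"
    by (metis (no_types, lifting) nonzero_eq_divide_eq of_nat_0_less_iff order_less_irrefl
        scaleR_scaleR scaleR_one)
  then show ?thesis
    unfolding d_def by (simp add: matrix_vector_mult_scaleR scaleR_diff_right)
qed

lemma int_vecs_fraction_decompose:
  assumes "real m *\<^sub>R d \<in> int_vecs" and "m > 0"
  obtains z where "z \<in> int_vecs" and "\<forall>i. (d - z) $ i \<in> (\<lambda>k. of_int k / real m) ` {0..<int m}"
proof
  define z :: "real^'a" where "z = (\<chi> i. of_int \<lfloor>d $ i\<rfloor>)"
  show "z \<in> int_vecs" by (simp add: z_def int_vecs_def)
  show "\<forall>i. (d - z) $ i \<in> (\<lambda>k. of_int k / real m) ` {0..<int m}"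
  proof
    fix i
    obtain s where s: "real m * d $ i = of_int s"
      using assms(1) by (auto simp: int_vecs_def elim: Ints_cases)
    have di: "d $ i = of_int s / of_int (int m)" using s assms(2) by (simp add: field_simps)
    have "(d - z) $ i = d $ i - of_int \<lfloor>d $ i\<rfloor>" by (simp add: z_def)
    also have "\<dots> = of_int s / real m - of_int (s div int m)"
      unfolding di floor_divide_of_int_eq by simp
    also have "\<dots> = of_int (s mod int m) / real m"
    proof -
      have "of_int s = real m * of_int (s div int m) + of_int (s mod int m)"
        by (metis of_int_add of_int_mult of_int_of_nat_eq div_mult_mod_eq mult.commute)
      then show ?thesis using assms(2) by (simp add: field_simps)
    qed
    finally show "(d - z) $ i \<in> (\<lambda>k. of_int k / real m) ` {0..<int m}"
      using assms(2) by simp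
  qed
qed

subsection \<open>Groups containing exactly the integral translations\<close>

locale lattice_group =
  fixes \<Gamma> :: "'n::finite aff set"
  assumes subgroup: "aff_subgroup \<Gamma> Aff"
    and translation_lattice: "{z. (z, mat 1) \<in> \<Gamma>} = int_vecs"
begin

lemma invertible_linear_part: "g \<in> \<Gamma> \<Longrightarrow> invertible (snd g)"
  using subgroup by (auto simp: aff_subgroup_def Aff_def)

lemma mult_mem: "g \<in> \<Gamma> \<Longrightarrow> h \<in> \<Gamma> \<Longrightarrow> aff_mult g h \<in> \<Gamma>"
  using subgroup by (auto simp: aff_subgroup_def)

lemma inv_mem: "g \<in> \<Gamma> \<Longrightarrow> aff_inv g \<in> \<Gamma>"
  using subgroup by (auto simp: aff_subgroup_def)

lemma translation_mem_iff: "(z, mat 1) \<in> \<Gamma> \<longleftrightarrow> z \<in> int_vecs"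
  using translation_lattice by auto

lemma same_linear_part_diff:
  assumes "(a, A) \<in> \<Gamma>" and "(b, A) \<in> \<Gamma>"
  shows "b - a \<in> int_vecs"
proof -
  have "aff_mult (b, A) (aff_inv (a, A)) = (b - a, mat 1)"
    using invertible_linear_part[OF assms(1)]
    by (simp add: aff_inv_def matrix_vector_mul_assoc matrix_inv_mult matrix_vector_mult_uminus)
  moreover have "aff_mult (b, A) (aff_inv (a, A)) \<in> \<Gamma>" using assms mult_mem inv_mem by blast
  ultimately show ?thesis using translation_mem_iff by simp
qed

lemma translate_mem:
  assumes "(a, A) \<in> \<Gamma>" and "z \<in> int_vecs"
  shows "(a + z, A) \<in> \<Gamma>"
  using mult_mem[of "(z, mat 1)" "(a, A)"] assms translation_mem_iff by (simp add: add.commute)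

lemma linear_part_int_vecs:
  assumes "(a, A) \<in> \<Gamma>" and "z \<in> int_vecs"
  shows "A *v z \<in> int_vecs"
proof -
  have "(a + A *v z, A) \<in> \<Gamma>"
    using mult_mem[of "(a, A)" "(z, mat 1)"] assms translation_mem_iff by simp
  from same_linear_part_diff[OF assms(1) this] show ?thesis by simp
qed

lemma holonomy_int_entries:
  assumes "A \<in> holonomy \<Gamma>"
  shows "A $ i $ j \<in> \<int>"
proof -
  obtain a where "(a, A) \<in> \<Gamma>" using assms by (force simp: holonomy_def)
  then have "A *v axis j 1 \<in> int_vecs" using linear_part_int_vecs axis_in_int_vecs by blast
  then show ?thesis by (simp add: int_vecs_def matrix_vector_mult_basis column_def)
qed

lemma finite_holonomy:
  assumes "crystallographic \<Gamma>"
  shows "finite (holonomy \<Gamma>)"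
proof -
  obtain e E where E: "invertible E" and Euc: "aff_subgroup (xi (e, E) ` \<Gamma>) Euc"
    using assms by (force simp: crystallographic_def Aff_def)
  have "orthogonal_matrix (E ** A ** matrix_inv E)" if A: "A \<in> holonomy \<Gamma>" for A
  proof -
    obtain a where "(a, A) \<in> \<Gamma>" using A by (force simp: holonomy_def)
    then have "xi (e, E) (a, A) \<in> Euc" using Euc by (auto simp: aff_subgroup_def)
    then show ?thesis by (simp add: Euc_def xi_def aff_inv_def)
  qed
  then have "holonomy \<Gamma>
      \<subseteq> {B. (\<forall>i j. B $ i $ j \<in> \<int>) \<and> orthogonal_matrix (E ** B ** matrix_inv E)}"
    using holonomy_int_entries by blast
  then show ?thesis using finite_int_matrices_conj_orthogonal[OF E] finite_subset by blast
qed

lemma mat_1_in_holonomy: "mat 1 \<in> holonomy \<Gamma>"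
  using subgroup by (force simp: holonomy_def aff_subgroup_def)

lemma holonomy_mult: "A \<in> holonomy \<Gamma> \<Longrightarrow> B \<in> holonomy \<Gamma> \<Longrightarrow> A ** B \<in> holonomy \<Gamma>"
  unfolding holonomy_def using mult_mem by (force simp: aff_mult_def)

lemma is_aut_xi_translation:
  assumes coboundary_int: "\<forall>g\<in>\<Gamma>. d - snd g *v d \<in> int_vecs"
  shows "is_aut \<Gamma> (xi (d, mat 1))"
  unfolding is_aut_def bij_betw_def
proof (intro conjI ballI)
  show "inj_on (xi (d, mat 1)) \<Gamma>"
    by (auto simp: inj_on_def xi_translation prod_eq_iff)
  have cob: "d - A *v d \<in> int_vecs" if "(a, A) \<in> \<Gamma>" for a A
    using coboundary_int that by force
  have image_mem: "xi (d, mat 1) (a, A) \<in> \<Gamma>"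
    and preimage: "xi (d, mat 1) (a - (d - A *v d), A) = (a, A)"
    and preimage_mem: "(a - (d - A *v d), A) \<in> \<Gamma>" if "(a, A) \<in> \<Gamma>" for a A
    using translate_mem[OF that cob[OF that]] translate_mem[OF that int_vecs_uminus[OF cob[OF that]]]
    by (simp_all add: xi_translation algebra_simps)
  show "xi (d, mat 1) ` \<Gamma> = \<Gamma>"
  proof
    show "xi (d, mat 1) ` \<Gamma> \<subseteq> \<Gamma>" using image_mem by force
    show "\<Gamma> \<subseteq> xi (d, mat 1) ` \<Gamma>"
    proof
      fix g assume "g \<in> \<Gamma>"
      moreover obtain a A where "g = (a, A)" by fastforce
      ultimately show "g \<in> xi (d, mat 1) ` \<Gamma>" using preimage preimage_mem by (metis image_eqI)
    qed
  qed
next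
  fix g h
  show "xi (d, mat 1) (aff_mult g h) = aff_mult (xi (d, mat 1) g) (xi (d, mat 1) h)"
    by (cases g; cases h) (simp add: xi_translation algebra_simps matrix_vector_mul_assoc)
qed

lemma is_aut_xi_translation_diff:
  assumes "\<forall>g\<in>\<Gamma>. d - snd g *v d \<in> int_vecs" and z: "z \<in> int_vecs"
  shows "is_aut \<Gamma> (xi (d - z, mat 1))"
proof (rule is_aut_xi_translation, rule ballI)
  fix g assume g: "g \<in> \<Gamma>"
  have "snd g *v z \<in> int_vecs" using linear_part_int_vecs[of "fst g" "snd g"] g z by simp
  then have "(d - snd g *v d) - (z - snd g *v z) \<in> int_vecs"
    using assms g by (blast intro: int_vecs_diff)
  then show "d - z - snd g *v (d - z) \<in> int_vecs" by (simp add: algebra_simps)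
qed

end

subsection \<open>Automorphisms fixing the translations\<close>

locale translation_fixing_aut = lattice_group +
  fixes \<phi> :: "'n::finite aff \<Rightarrow> 'n aff"
  assumes aut: "is_aut \<Gamma> \<phi>"
    and fixes_translations: "\<forall>z\<in>int_vecs. \<phi> (z, mat 1) = (z, mat 1)"
begin

lemma aut_mem: "g \<in> \<Gamma> \<Longrightarrow> \<phi> g \<in> \<Gamma>"
  using aut unfolding is_aut_def bij_betw_def by blast

lemma aut_mult: "g \<in> \<Gamma> \<Longrightarrow> h \<in> \<Gamma> \<Longrightarrow> \<phi> (aff_mult g h) = aff_mult (\<phi> g) (\<phi> h)"
  using aut unfolding is_aut_def by blast

lemma aut_translation: "z \<in> int_vecs \<Longrightarrow> \<phi> (z, mat 1) = (z, mat 1)"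
  using fixes_translations by blast

text \<open>Apply \<open>\<phi>\<close> to \<open>g (e\<^sub>j, I) = (A e\<^sub>j, I) g\<close>: the column \<open>A' e\<^sub>j\<close> of the linear
  part of \<open>\<phi> g\<close> equals \<open>A e\<^sub>j\<close>.\<close>

lemma linear_part_aut:
  assumes g: "g \<in> \<Gamma>"
  shows "snd (\<phi> g) = snd g"
proof -
  obtain a A where gA: "g = (a, A)" by fastforce
  obtain a' A' where \<phi>g: "\<phi> g = (a', A')" by fastforce
  have "A' *v axis j 1 = A *v axis j 1" for j
  proof -
    let ?z = "axis j 1 :: real^'n"
    have Az: "A *v ?z \<in> int_vecs" using linear_part_int_vecs g gA axis_in_int_vecs by blast
    have "aff_mult g (?z, mat 1) = aff_mult (A *v ?z, mat 1) g" using gA by simp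
    moreover have "\<phi> (aff_mult g (?z, mat 1)) = (a' + A' *v ?z, A')"
      using aut_mult[OF g, of "(?z, mat 1)"] aut_translation[of ?z] axis_in_int_vecs[of j]
        translation_mem_iff \<phi>g
      by simp
    moreover have "\<phi> (aff_mult (A *v ?z, mat 1) g) = (A *v ?z + a', A')"
      using aut_mult[OF _ g] Az translation_mem_iff aut_translation \<phi>g by simp
    ultimately show ?thesis by simp
  qed
  then have "A' = A" by (simp add: vec_eq_iff matrix_vector_mult_basis column_def)
  then show ?thesis using gA \<phi>g by simp
qed

lemma aut_translation_shift_eq:
  assumes g: "g \<in> \<Gamma>" and h: "h \<in> \<Gamma>" and same: "snd g = snd h"
  shows "fst (\<phi> h) - fst h = fst (\<phi> g) - fst g"
proof -
  obtain a A where gA: "g = (a, A)" by fastforce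
  obtain b where hA: "h = (b, A)" using same gA by (cases h) auto
  have w: "b - a \<in> int_vecs" using same_linear_part_diff g h gA hA by blast
  have "h = aff_mult (b - a, mat 1) g" using gA hA by simp
  then have "\<phi> h = aff_mult (b - a, mat 1) (\<phi> g)"
    using aut_mult[of "(b - a, mat 1)" g] g w translation_mem_iff aut_translation by simp
  then show ?thesis using gA hA by (simp add: aff_mult_def algebra_simps)
qed

definition cocycle :: "real^'n^'n \<Rightarrow> real^'n" where
  "cocycle A = (let g = SOME g. g \<in> \<Gamma> \<and> snd g = A in fst (\<phi> g) - fst g)"

lemma aut_eq:
  assumes g: "g \<in> \<Gamma>"
  shows "\<phi> g = (fst g + cocycle (snd g), snd g)"
proof -
  let ?s = "SOME h. h \<in> \<Gamma> \<and> snd h = snd g"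
  have "?s \<in> \<Gamma> \<and> snd ?s = snd g" by (rule someI[of _ g]) (simp add: g)
  then have "fst (\<phi> g) - fst g = cocycle (snd g)"
    using aut_translation_shift_eq[OF _ g] by (simp add: cocycle_def Let_def)
  then show ?thesis using linear_part_aut[OF g] by (simp add: prod_eq_iff algebra_simps)
qed

lemma cocycle_int_vecs:
  assumes g: "g \<in> \<Gamma>"
  shows "cocycle (snd g) \<in> int_vecs"
proof -
  have "(fst g + cocycle (snd g), snd g) \<in> \<Gamma>" using aut_mem[OF g] aut_eq[OF g] by simp
  from same_linear_part_diff[of "fst g" "snd g", OF _ this] show ?thesis using g by simp
qed

lemma cocycle_mult:
  assumes g: "g \<in> \<Gamma>" and h: "h \<in> \<Gamma>"
  shows "cocycle (snd g ** snd h) = cocycle (snd g) + snd g *v cocycle (snd h)"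
proof -
  have "\<phi> (aff_mult g h) = aff_mult (\<phi> g) (\<phi> h)" by (rule aut_mult[OF g h])
  then show ?thesis
    using aut_eq[OF mult_mem[OF g h]] aut_eq[OF g] aut_eq[OF h]
    by (simp add: aff_mult_def algebra_simps)
qed

lemma aut_eq_xi_translation:
  assumes fin: "finite (holonomy \<Gamma>)"
  obtains d where "real (card (holonomy \<Gamma>)) *\<^sub>R d \<in> int_vecs"
    and "\<forall>g\<in>\<Gamma>. d - snd g *v d \<in> int_vecs"
    and "\<forall>g\<in>\<Gamma>. \<phi> g = xi (d, mat 1) g"
proof
  let ?F = "holonomy \<Gamma>"
  define d where "d = (1 / real (card ?F)) *\<^sub>R (\<Sum>B\<in>?F. cocycle B)"
  have coboundary: "cocycle (snd g) = d - snd g *v d" if "g \<in> \<Gamma>" for g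
    unfolding d_def
  proof (rule finite_group_cocycle_coboundary[OF fin holonomy_mult])
    show "invertible A" if "A \<in> ?F" for A
      using that invertible_linear_part by (auto simp: holonomy_def)
    show "cocycle (A ** B) = cocycle A + A *v cocycle B" if "A \<in> ?F" "B \<in> ?F" for A B
      using that cocycle_mult by (auto simp: holonomy_def)
    show "snd g \<in> ?F" using \<open>g \<in> \<Gamma>\<close> by (simp add: holonomy_def)
  qed
  have "card ?F > 0" using fin mat_1_in_holonomy card_gt_0_iff by blast
  then have "real (card ?F) *\<^sub>R d = (\<Sum>B\<in>?F. cocycle B)" by (simp add: d_def)
  also have "\<dots> \<in> int_vecs"
    by (rule int_vecs_sum) (auto simp: holonomy_def intro: cocycle_int_vecs)
  finally show "real (card ?F) *\<^sub>R d \<in> int_vecs" .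
  show "\<forall>g\<in>\<Gamma>. d - snd g *v d \<in> int_vecs" using coboundary cocycle_int_vecs by metis
  show "\<forall>g\<in>\<Gamma>. \<phi> g = xi (d, mat 1) g"
    using aut_eq coboundary by (simp add: xi_translation algebra_simps)
qed

end

theorem theorem5p3:
  fixes \<Gamma> :: "'n::finite aff set"
  assumes "crystallographic \<Gamma>"
    and "{z. (z, mat 1) \<in> \<Gamma>} = int_vecs"
  shows "\<exists>\<Delta>. finite \<Delta> \<and> (\<forall>d\<in>\<Delta>. is_aut \<Gamma> (xi (d, mat 1))) \<and>
    (\<forall>\<phi>. is_aut \<Gamma> \<phi> \<and> (\<forall>z\<in>int_vecs. \<phi> (z, mat 1) = (z, mat 1)) \<longrightarrow>
      (\<exists>dint\<in>int_vecs. \<exists>dbase\<in>\<Delta>.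
         \<forall>g\<in>\<Gamma>. \<phi> g = xi (dint, mat 1) (xi (dbase, mat 1) g)))"
proof -
  interpret lattice_group \<Gamma>
    using assms by unfold_locales (simp_all add: crystallographic_def)
  have fin: "finite (holonomy \<Gamma>)" by (rule finite_holonomy[OF assms(1)])
  define m where "m = card (holonomy \<Gamma>)"
  have "m > 0" using fin mat_1_in_holonomy card_gt_0_iff m_def by blast
  define K where "K = (\<lambda>k. of_int k / real m) ` {0..<int m}"
  define \<Delta> where "\<Delta> = {v. (\<forall>i. v $ i \<in> K) \<and> is_aut \<Gamma> (xi (v, mat 1))}"
  have "finite \<Delta>"
    using finite_vec_components[of K] finite_subset by (force simp: \<Delta>_def K_def)
  moreover have "\<exists>dint\<in>int_vecs. \<exists>dbase\<in>\<Delta>. \<forall>g\<in>\<Gamma>. \<phi> g = xi (dint, mat 1) (xi (dbase, mat 1) g)"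
    if "is_aut \<Gamma> \<phi>" and "\<forall>z\<in>int_vecs. \<phi> (z, mat 1) = (z, mat 1)" for \<phi>
  proof -
    interpret translation_fixing_aut \<Gamma> \<phi> by unfold_locales (use that in blast)+
    obtain d where d: "real m *\<^sub>R d \<in> int_vecs" "\<forall>g\<in>\<Gamma>. d - snd g *v d \<in> int_vecs"
      and \<phi>: "\<forall>g\<in>\<Gamma>. \<phi> g = xi (d, mat 1) g"
      using aut_eq_xi_translation[OF fin] unfolding m_def by blast
    obtain dint where dint: "dint \<in> int_vecs" and "\<forall>i. (d - dint) $ i \<in> K"
      using int_vecs_fraction_decompose[OF d(1) \<open>m > 0\<close>] unfolding K_def by blast
    then have "d - dint \<in> \<Delta>" using is_aut_xi_translation_diff[OF d(2) dint] by (simp add: \<Delta>_def)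
    moreover have "\<forall>g\<in>\<Gamma>. \<phi> g = xi (dint, mat 1) (xi (d - dint, mat 1) g)"
      using \<phi> by (simp add: xi_translation_comp)
    ultimately show ?thesis using dint by blast
  qed
  ultimately show ?thesis unfolding \<Delta>_def by blast
qed

end
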